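(* Consider the finite game with players $\mathcal{M}=\{1,\dots,M\}$, common action set $\mathcal{N}$ and costs $c_i(\mathbf{a}) = \frac{\sigma^2}{h_{ia_i}}\,\frac{\beta_i}{[1-\sum_{l\in\mathcal{M}_{a_i}(\mathbf{a})}\beta_l]^+}$, and suppose $h_{ij}=h$ for all $i\in\mathcal{M}$, $j\in\mathcal{N}$ (for a constant $h>0$) and $\beta_i=\beta$ for all $i\in\mathcal{M}$ (single class traffic). Then every Nash equilibrium of this game is system optimal, i.e., minimizes $C(\mathbf{a})=\sum_{i=1}^M c_i(\mathbf{a})$ over all $\mathbf{a}\in\mathcal{N}^M$.
   Context: Uplink cellular model: mobiles $\mathcal{M}=\{1,\dots,M\}$, BSs $\mathcal{N}=\{1,\dots,N\}$, power gains $h_{ij}>0$, noise power $\sigma^2>0$, target SINRs $\gamma_i>0$, $\beta_i=\gamma_i/(1+\gamma_i)$. Association profile $\mathbf{a}\in\mathcal{N}^M$, $\mathcal{M}_j(\mathbf{a})=\{l: a_l=j\}$, $[x]^+=\max(x,0)$, positive$/0=+\infty$; $(b,\mathbf{a}_{-i})$ replaces $a_i$ by $b$. $\mathbf{a}$ is a Nash equilibrium if $a_i\in\arg\min_{b\in\mathcal{N}}c_i(b,\mathbf{a}_{-i})$ for all $i$. Standing assumption: there exists at least one feasible association, i.e. some $\mathbf{a}$ with $\sum_{l\in\mathcal{M}_j(\mathbf{a})}\beta_l<1$ for all $j$. *)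

theory Defs
  imports "HOL-Analysis.Analysis" "HOL-Library.Extended_Real"
begin

(* Mobiles are 1..M, base stations 1..N. An association profile is a function
   a :: nat => nat; only its values on {1..M} matter. *)

definition beta_of :: "real \<Rightarrow> real" where
  "beta_of g = g / (1 + g)"

definition profiles :: "nat \<Rightarrow> nat \<Rightarrow> (nat \<Rightarrow> nat) set" where
  "profiles M N = {a. \<forall>i\<in>{1..M}. a i \<in> {1..N}}"

definition cell :: "nat \<Rightarrow> (nat \<Rightarrow> nat) \<Rightarrow> nat \<Rightarrow> nat set" where
  "cell M a j = {l \<in> {1..M}. a l = j}"

definition load :: "nat \<Rightarrow> (nat \<Rightarrow> real) \<Rightarrow> (nat \<Rightarrow> nat) \<Rightarrow> nat \<Rightarrow> real" where
  "load M beta a j = (\<Sum>l\<in>cell M a j. beta l)"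

definition feasible :: "nat \<Rightarrow> nat \<Rightarrow> (nat \<Rightarrow> real) \<Rightarrow> (nat \<Rightarrow> nat) \<Rightarrow> bool" where
  "feasible M N beta a \<longleftrightarrow> a \<in> profiles M N \<and> (\<forall>j\<in>{1..N}. load M beta a j < 1)"

definition cost :: "nat \<Rightarrow> real \<Rightarrow> (nat \<Rightarrow> nat \<Rightarrow> real) \<Rightarrow> (nat \<Rightarrow> real)
                     \<Rightarrow> (nat \<Rightarrow> nat) \<Rightarrow> nat \<Rightarrow> ereal" where
  "cost M sigma2 h beta a i =
     (let d = max (1 - load M beta a (a i)) 0 in
      if d = 0 then \<infinity> else ereal (sigma2 / h i (a i) * beta i / d))"

definition total_cost :: "nat \<Rightarrow> real \<Rightarrow> (nat \<Rightarrow> nat \<Rightarrow> real) \<Rightarrow> (nat \<Rightarrow> real)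
                     \<Rightarrow> (nat \<Rightarrow> nat) \<Rightarrow> ereal" where
  "total_cost M sigma2 h beta a = (\<Sum>i\<in>{1..M}. cost M sigma2 h beta a i)"

definition nash_eq :: "nat \<Rightarrow> nat \<Rightarrow> real \<Rightarrow> (nat \<Rightarrow> nat \<Rightarrow> real) \<Rightarrow> (nat \<Rightarrow> real)
                     \<Rightarrow> (nat \<Rightarrow> nat) \<Rightarrow> bool" where
  "nash_eq M N sigma2 h beta a \<longleftrightarrow> a \<in> profiles M N \<and>
     (\<forall>i\<in>{1..M}. \<forall>b\<in>{1..N}. cost M sigma2 h beta a i \<le> cost M sigma2 h beta (a(i := b)) i)"

definition system_optimal :: "nat \<Rightarrow> nat \<Rightarrow> real \<Rightarrow> (nat \<Rightarrow> nat \<Rightarrow> real) \<Rightarrow> (nat \<Rightarrow> real)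
                     \<Rightarrow> (nat \<Rightarrow> nat) \<Rightarrow> bool" where
  "system_optimal M N sigma2 h beta a \<longleftrightarrow> a \<in> profiles M N \<and>
     (\<forall>a'\<in>profiles M N. total_cost M sigma2 h beta a \<le> total_cost M sigma2 h beta a')"

end

theory Submission
  imports Defs
begin

text \<open>With identical gains and targets, a mobile's cost depends only on the number n of mobiles
in its cell: it is K b / (1 - n b), so a cell holding n mobiles contributes the discretely
convex amount n K b / (1 - n b) to the total cost. At a Nash equilibrium no mobile gains by
moving from a cell of size n_j to one of size n_k + 1; since some feasible association exists,
this forces every cell to be feasible (an overloaded cell would make every other cell
overloaded after one arrival, leaving too few mobiles for a feasible association), and then
forces the cell sizes to differ by at most one. A balanced occupancy minimises a sum of
convex functions under a fixed total, by repeatedly moving one mobile from a fuller to an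
emptier cell.\<close>

definition user_cost :: "real \<Rightarrow> real \<Rightarrow> nat \<Rightarrow> ereal" where
  "user_cost K b n = (if 1 \<le> real n * b then \<infinity> else ereal (K * b / (1 - real n * b)))"

definition cell_cost :: "real \<Rightarrow> real \<Rightarrow> nat \<Rightarrow> real" where
  "cell_cost K b n = real n * K * b / (1 - real n * b)"

lemma cell_cost_Suc_diff:
  assumes "0 \<le> b" and "real (Suc n) * b < 1"
  shows "cell_cost K b (Suc n) - cell_cost K b n = K * b / ((1 - real n * b) * (1 - real (Suc n) * b))"
proof -
  have "0 < 1 - real (Suc n) * b" using assms(2) by simp
  moreover have "0 < 1 - real n * b" using assms by (smt (verit) mult_right_mono of_nat_Suc)
  ultimately show ?thesis unfolding cell_cost_def by (simp add: field_simps)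
qed

lemma cell_cost_increment_mono:
  assumes "0 \<le> K" and "0 \<le> b" and "x \<le> y" and "real (Suc y) * b < 1"
  shows "cell_cost K b (Suc x) - cell_cost K b x \<le> cell_cost K b (Suc y) - cell_cost K b y"
proof -
  have "real x * b \<le> real y * b" using assms by (simp add: mult_right_mono)
  then have "1 - real y * b \<le> 1 - real x * b" and "1 - real (Suc y) * b \<le> 1 - real (Suc x) * b"
    by (simp_all add: algebra_simps)
  moreover have "0 < 1 - real (Suc y) * b" and "0 < 1 - real y * b"
    using assms by (simp_all add: algebra_simps)
  ultimately have "0 < (1 - real y * b) * (1 - real (Suc y) * b)"
    and "(1 - real y * b) * (1 - real (Suc y) * b) \<le> (1 - real x * b) * (1 - real (Suc x) * b)"
    by (auto intro!: mult_mono)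
  then have "K * b / ((1 - real x * b) * (1 - real (Suc x) * b))
      \<le> K * b / ((1 - real y * b) * (1 - real (Suc y) * b))"
    using assms by (intro divide_left_mono) auto
  moreover have "real (Suc x) * b < 1"
    using assms by (smt (verit) mult_right_mono of_nat_mono Suc_le_mono)
  ultimately show ?thesis using assms by (simp add: cell_cost_Suc_diff)
qed

lemma sum_fun_upd_pair:
  fixes g :: "'a \<Rightarrow> 'b \<Rightarrow> 'c::comm_monoid_add"
  assumes "finite I" and "k \<in> I" and "l \<in> I" and "k \<noteq> l"
  shows "(\<Sum>j\<in>I. g j ((m(k := u, l := v)) j)) + g k (m k) + g l (m l)
       = (\<Sum>j\<in>I. g j (m j)) + g k u + g l v"
proof -
  have split: "sum f I = f k + f l + sum f (I - {k, l})" for f :: "'a \<Rightarrow> 'c"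
  proof -
    have "I - {k, l} = I - {k} - {l}" by auto
    with assms sum.remove[of I k f] sum.remove[of "I - {k}" l f] show ?thesis
      by (simp add: add.assoc)
  qed
  have "(\<Sum>j\<in>I - {k, l}. g j ((m(k := u, l := v)) j)) = (\<Sum>j\<in>I - {k, l}. g j (m j))"
    by (intro sum.cong) auto
  then show ?thesis using assms by (simp add: split[of "\<lambda>j. g j (_ j)"] ac_simps)
qed

lemma exists_above_and_below:
  fixes m n :: "'a \<Rightarrow> nat"
  assumes "finite I" and "sum m I = sum n I" and "\<exists>j\<in>I. m j \<noteq> n j"
  obtains k l where "k \<in> I" "n k < m k" "l \<in> I" "m l < n l"
proof -
  have "\<exists>k\<in>I. n k < m k" and "\<exists>l\<in>I. m l < n l"
    using assms sum_strict_mono_ex1[of I m n] sum_strict_mono_ex1[of I n m]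
    by (metis linorder_neqE_nat not_le order_less_irrefl)+
  with that show ?thesis by blast
qed

lemma balanced_minimizes_convex_sum:
  fixes f :: "nat \<Rightarrow> real" and n m :: "'a \<Rightarrow> nat"
  assumes fin: "finite I"
    and convex: "\<And>x y. x \<le> y \<Longrightarrow> P (Suc y) \<Longrightarrow> f (Suc x) - f x \<le> f (Suc y) - f y"
    and down_closed: "\<And>x y. x \<le> y \<Longrightarrow> P y \<Longrightarrow> P x"
    and balanced: "\<forall>j\<in>I. \<forall>k\<in>I. n j \<le> Suc (n k)"
    and "sum m I = sum n I" and "\<forall>j\<in>I. P (m j)"
  shows "(\<Sum>j\<in>I. f (n j)) \<le> (\<Sum>j\<in>I. f (m j))"
  using assms(5,6)
proof (induction "\<Sum>j\<in>I. m j - n j" arbitrary: m rule: less_induct)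
  case less
  show ?case
  proof (cases "\<forall>j\<in>I. m j = n j")
    case True
    then show ?thesis by simp
  next
    case False
    then obtain k l where k: "k \<in> I" "n k < m k" and l: "l \<in> I" "m l < n l"
      using exists_above_and_below[OF fin less.prems(1)] by blast
    then have "k \<noteq> l" by auto
    have lk: "Suc (m l) \<le> m k"
      using balanced k l by (meson Suc_leI le_trans not_less_eq_eq)
    \<comment> \<open>Moving one unit from k to l brings m closer to n and, by convexity, does not
      increase the sum of f.\<close>
    define m' where "m' = m(k := m k - 1, l := Suc (m l))"
    note upd = sum_fun_upd_pair[OF fin k(1) l(1) \<open>k \<noteq> l\<close>, of _ m "m k - 1" "Suc (m l)",
        folded m'_def]
    have "sum m' I = sum n I"
      using upd[of "\<lambda>_ x. x"] less.prems(1) k by simp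
    moreover have "\<forall>j\<in>I. P (m' j)"
    proof
      fix j assume "j \<in> I"
      then have "m' j \<le> m j \<or> m' j \<le> m k"
        using lk by (auto simp: m'_def)
      then show "P (m' j)"
        using down_closed less.prems(2) \<open>j \<in> I\<close> k(1) by blast
    qed
    moreover have "(\<Sum>j\<in>I. m' j - n j) < (\<Sum>j\<in>I. m j - n j)"
      using upd[of "\<lambda>j x. x - n j"] k l by simp
    ultimately have "(\<Sum>j\<in>I. f (n j)) \<le> (\<Sum>j\<in>I. f (m' j))"
      using less.hyps by blast
    also have "\<dots> \<le> (\<Sum>j\<in>I. f (m j))"
    proof -
      have "f (Suc (m l)) - f (m l) \<le> f (m k) - f (m k - 1)"
        using convex[of "m l" "m k - 1"] lk less.prems(2) k by (simp add: Suc_diff_1)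
      with upd[of "\<lambda>_. f"] show ?thesis by simp
    qed
    finally show ?thesis .
  qed
qed

lemma user_cost_strict_mono:
  assumes "0 < K" and "0 < b" and "x < y" and "real y * b < 1"
  shows "user_cost K b x < user_cost K b y"
proof -
  have "real x * b < real y * b" using assms by simp
  then have "real x * b < 1" using assms(4) by linarith
  with \<open>real x * b < real y * b\<close> assms show ?thesis
    unfolding user_cost_def by (auto intro!: divide_strict_left_mono)
qed

lemma stable_occupancy_feasible:
  fixes n m :: "'a \<Rightarrow> nat"
  assumes fin: "finite I" and b: "0 < b"
    and stable: "\<And>j k. j \<in> I \<Longrightarrow> k \<in> I \<Longrightarrow> j \<noteq> k \<Longrightarrow> 0 < n j \<Longrightarrow>
        user_cost K b (n j) \<le> user_cost K b (Suc (n k))"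
    and "sum m I = sum n I" and m_feasible: "\<forall>j\<in>I. real (m j) * b < 1"
  shows "\<forall>j\<in>I. real (n j) * b < 1"
proof (rule ccontr)
  assume "\<not> ?thesis"
  then obtain j where j: "j \<in> I" "1 \<le> real (n j) * b" by (auto simp: not_less)
  then have "0 < n j" by (auto intro: gr0I)
  have "m j < n j"
  proof -
    have "real (m j) * b < real (n j) * b" using j m_feasible by force
    then show ?thesis using b by simp
  qed
  moreover have "m k \<le> n k" if "k \<in> I" "k \<noteq> j" for k
  proof -
    have "user_cost K b (n j) = \<infinity>" using j by (simp add: user_cost_def)
    then have "user_cost K b (Suc (n k)) = \<infinity>"
      using stable[OF j(1) that(1)] that(2) \<open>0 < n j\<close> by (simp add: eq_commute)
    then have "real (m k) * b < real (Suc (n k)) * b"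
      using m_feasible that(1) by (auto simp: user_cost_def split: if_splits)
    then show ?thesis using b by simp
  qed
  ultimately have "sum m I < sum n I"
    using fin j(1) by (intro sum_strict_mono_ex1) (auto simp: le_less)
  with \<open>sum m I = sum n I\<close> show False by simp
qed

lemma stable_occupancy_balanced:
  fixes n :: "'a \<Rightarrow> nat"
  assumes "0 < K" and "0 < b"
    and stable: "\<And>j k. j \<in> I \<Longrightarrow> k \<in> I \<Longrightarrow> j \<noteq> k \<Longrightarrow> 0 < n j \<Longrightarrow>
        user_cost K b (n j) \<le> user_cost K b (Suc (n k))"
    and feasible: "\<forall>j\<in>I. real (n j) * b < 1"
  shows "\<forall>j\<in>I. \<forall>k\<in>I. n j \<le> Suc (n k)"
proof (intro ballI, rule ccontr)
  fix j k assume "j \<in> I" "k \<in> I" "\<not> n j \<le> Suc (n k)"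
  then have "user_cost K b (Suc (n k)) < user_cost K b (n j)"
    using assms by (intro user_cost_strict_mono) auto
  moreover have "user_cost K b (n j) \<le> user_cost K b (Suc (n k))"
    using stable \<open>j \<in> I\<close> \<open>k \<in> I\<close> \<open>\<not> n j \<le> Suc (n k)\<close> by force
  ultimately show False by simp
qed

lemma sum_over_cells:
  assumes "a \<in> profiles M N"
  shows "(\<Sum>i\<in>{1..M}. g i) = (\<Sum>j\<in>{1..N}. \<Sum>i\<in>cell M a j. g i)"
  using assms unfolding cell_def profiles_def by (intro sum.group[symmetric]) auto

lemma sum_card_cells:
  assumes "a \<in> profiles M N"
  shows "(\<Sum>j\<in>{1..N}. card (cell M a j)) = M"
  using sum_over_cells[OF assms, of "\<lambda>_. 1::nat"] by simp

lemma card_cell_fun_upd: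
  assumes "i \<in> {1..M}" and "k \<noteq> a i"
  shows "card (cell M (a(i := k)) k) = Suc (card (cell M a k))"
proof -
  have "cell M (a(i := k)) k = insert i (cell M a k)" and "i \<notin> cell M a k"
    using assms unfolding cell_def by auto
  then show ?thesis by (simp add: cell_def)
qed

locale single_class =
  fixes M N :: nat and sigma2 hc b :: real
    and h :: "nat \<Rightarrow> nat \<Rightarrow> real" and beta :: "nat \<Rightarrow> real"
  assumes sigma2_pos: "0 < sigma2" and hc_pos: "0 < hc" and b_pos: "0 < b"
    and h_const: "\<forall>i\<in>{1..M}. \<forall>j\<in>{1..N}. h i j = hc"
    and beta_const: "\<forall>i\<in>{1..M}. beta i = b"
begin

abbreviation occupancy :: "(nat \<Rightarrow> nat) \<Rightarrow> nat \<Rightarrow> nat" where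
  "occupancy a j \<equiv> card (cell M a j)"

lemma load_eq: "load M beta a j = real (occupancy a j) * b"
proof -
  have "load M beta a j = (\<Sum>l\<in>cell M a j. b)"
    unfolding load_def by (intro sum.cong) (auto simp: cell_def beta_const)
  then show ?thesis by simp
qed

lemma cost_eq:
  assumes "i \<in> {1..M}" and "a i \<in> {1..N}"
  shows "cost M sigma2 h beta a i = user_cost (sigma2 / hc) b (occupancy a (a i))"
  using assms h_const beta_const
  unfolding cost_def user_cost_def Let_def load_eq by (auto simp: max_def)

lemma total_cost_eq:
  assumes "a \<in> profiles M N"
  shows "total_cost M sigma2 h beta a
       = (\<Sum>j\<in>{1..N}. \<Sum>i\<in>cell M a j. user_cost (sigma2 / hc) b (occupancy a j))"
  unfolding total_cost_def sum_over_cells[OF assms]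
  using assms by (intro sum.cong refl) (auto simp: cost_eq cell_def profiles_def)

lemma total_cost_overloaded:
  assumes "a \<in> profiles M N" and "j \<in> {1..N}" and "1 \<le> real (occupancy a j) * b"
  shows "total_cost M sigma2 h beta a = \<infinity>"
proof -
  have "cell M a j \<noteq> {}" using assms(3) by (intro notI) simp
  with assms show ?thesis
    by (auto simp: total_cost_eq sum_Pinfty user_cost_def cell_def)
qed

lemma total_cost_feasible:
  assumes "a \<in> profiles M N" and feasible: "\<forall>j\<in>{1..N}. real (occupancy a j) * b < 1"
  shows "total_cost M sigma2 h beta a = ereal (\<Sum>j\<in>{1..N}. cell_cost (sigma2 / hc) b (occupancy a j))"
proof -
  have "(\<Sum>i\<in>cell M a j. user_cost (sigma2 / hc) b (occupancy a j))
      = ereal (cell_cost (sigma2 / hc) b (occupancy a j))" if "j \<in> {1..N}" for j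
  proof -
    have "\<not> 1 \<le> real (occupancy a j) * b" using feasible[rule_format, OF that] by simp
    then show ?thesis by (simp add: user_cost_def cell_cost_def)
  qed
  then show ?thesis
    by (simp add: total_cost_eq[OF assms(1)] flip: sum_ereal)
qed

lemma nash_eq_stable_occupancy:
  assumes "nash_eq M N sigma2 h beta a"
    and "j \<in> {1..N}" and "k \<in> {1..N}" and "j \<noteq> k" and "0 < occupancy a j"
  shows "user_cost (sigma2 / hc) b (occupancy a j) \<le> user_cost (sigma2 / hc) b (Suc (occupancy a k))"
proof -
  obtain i where i: "i \<in> {1..M}" "a i = j"
    using \<open>0 < occupancy a j\<close> by (auto simp: cell_def card_gt_0_iff)
  have "cost M sigma2 h beta a i \<le> cost M sigma2 h beta (a(i := k)) i"
    using assms(1,3) i(1) unfolding nash_eq_def by blast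
  with i assms(2-4) show ?thesis
    by (simp add: cost_eq card_cell_fun_upd)
qed

lemma balanced_occupancy_optimal:
  assumes a: "a \<in> profiles M N" and a': "a' \<in> profiles M N"
    and a_feasible: "\<forall>j\<in>{1..N}. real (occupancy a j) * b < 1"
    and balanced: "\<forall>j\<in>{1..N}. \<forall>k\<in>{1..N}. occupancy a j \<le> Suc (occupancy a k)"
  shows "total_cost M sigma2 h beta a \<le> total_cost M sigma2 h beta a'"
proof (cases "\<forall>j\<in>{1..N}. real (occupancy a' j) * b < 1")
  case True
  let ?K = "sigma2 / hc"
  have K: "0 < ?K" using sigma2_pos hc_pos by simp
  have feasible_down_closed: "real x * b < 1" if "x \<le> y" and "real y * b < 1" for x y
    using that b_pos by (smt (verit) mult_right_mono of_nat_mono)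
  have "(\<Sum>j\<in>{1..N}. cell_cost ?K b (occupancy a j)) \<le> (\<Sum>j\<in>{1..N}. cell_cost ?K b (occupancy a' j))"
  proof (rule balanced_minimizes_convex_sum[where P = "\<lambda>x. real x * b < 1"])
    show "cell_cost ?K b (Suc x) - cell_cost ?K b x \<le> cell_cost ?K b (Suc y) - cell_cost ?K b y"
      if "x \<le> y" and "real (Suc y) * b < 1" for x y
      using K b_pos that by (intro cell_cost_increment_mono) auto
    show "sum (occupancy a') {1..N} = sum (occupancy a) {1..N}"
      using sum_card_cells[OF a] sum_card_cells[OF a'] by simp
  qed (use balanced True feasible_down_closed in auto)
  with True show ?thesis
    using a a' a_feasible by (simp add: total_cost_feasible)
next
  case False
  then show ?thesis using a' by (auto simp: not_less total_cost_overloaded)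
qed

theorem nash_eq_system_optimal:
  assumes feasible_exists: "\<exists>a0. feasible M N beta a0"
    and nash: "nash_eq M N sigma2 h beta a"
  shows "system_optimal M N sigma2 h beta a"
proof -
  let ?I = "{1..N}"
  have a: "a \<in> profiles M N" using nash by (simp add: nash_eq_def)
  note stable = nash_eq_stable_occupancy[OF nash]
  obtain a0 where a0: "feasible M N beta a0" using feasible_exists by blast
  have "sum (occupancy a0) ?I = sum (occupancy a) ?I"
    using a0 sum_card_cells[OF a] sum_card_cells[of a0 M N] by (simp add: feasible_def)
  moreover have "\<forall>j\<in>?I. real (occupancy a0 j) * b < 1"
    using a0 by (simp add: feasible_def load_eq)
  ultimately have a_feasible: "\<forall>j\<in>?I. real (occupancy a j) * b < 1"
    by (intro stable_occupancy_feasible[OF _ b_pos stable]) auto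
  moreover have "\<forall>j\<in>?I. \<forall>k\<in>?I. occupancy a j \<le> Suc (occupancy a k)"
    using sigma2_pos hc_pos b_pos stable a_feasible
    by (intro stable_occupancy_balanced[where K = "sigma2 / hc"]) auto
  ultimately show ?thesis
    using a by (simp add: system_optimal_def balanced_occupancy_optimal)
qed

end

theorem proposition6:
  fixes M N :: nat and sigma2 hc g :: real
    and h :: "nat \<Rightarrow> nat \<Rightarrow> real" and gamma :: "nat \<Rightarrow> real" and a :: "nat \<Rightarrow> nat"
  assumes sigma_pos: "sigma2 > 0"
    and h_pos: "hc > 0"
    and h_const: "\<forall>i\<in>{1..M}. \<forall>j\<in>{1..N}. h i j = hc"
    and g_pos: "g > 0"
    and gamma_const: "\<forall>i\<in>{1..M}. gamma i = g"
    and feas: "\<exists>a0. feasible M N (\<lambda>i. beta_of (gamma i)) a0"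
    and ne: "nash_eq M N sigma2 h (\<lambda>i. beta_of (gamma i)) a"
  shows "system_optimal M N sigma2 h (\<lambda>i. beta_of (gamma i)) a"
proof -
  have "single_class M N sigma2 hc (beta_of g) h (\<lambda>i. beta_of (gamma i))"
    using sigma_pos h_pos h_const g_pos gamma_const
    by unfold_locales (simp_all add: beta_of_def)
  then show ?thesis using feas ne by (rule single_class.nash_eq_system_optimal)
qed

end
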